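(* For all positive integers $N$ and $Z<N^2$ there exist matrices $A$ and $C$ with $\mathrm{nnz}(A),\mathrm{nnz}(C) \leq N$, $\mathrm{nnz}(AC) \leq Z$, such that computing $AC$ in the semiring I/O model requires $\Omega \left(\min \left( \frac{N^2}{MB},\frac{N\sqrt{Z}}{\sqrt{M} B} \right) \right)$ I/Os.
   Context: $\mathrm{nnz}(X)$ denotes the number of nonzero entries of a matrix $X$. The semiring I/O model: an external memory model with internal memory of $M$ words and disk blocks of $B$ words, cost measured in block transfers (I/Os); a memory block holds up to $B$ matrix entries (semiring elements, with coordinates); semiring elements can only be copied, multiplied and added, with no other operations (no division, subtraction, or equality test). The algorithm must work for every semiring and arbitrary values of the nonzero input entries. *)

theory Defs
  imports Complex_Main "HOL-Library.Multiset"
begin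

text \<open>A sparse matrix is represented by the set of coordinates of its nonzero
  entries; nnz is the cardinality of this set. Since the input values are arbitrary
  semiring elements, the nonzero pattern of AC is the structural one.\<close>

definition prod_pattern :: "(nat \<times> nat) set \<Rightarrow> (nat \<times> nat) set \<Rightarrow> (nat \<times> nat) set" where
  "prod_pattern A C = {(i, k). \<exists>j. (i, j) \<in> A \<and> (j, k) \<in> C}"

text \<open>Input variables: Inl (i,j) is the entry a_ij of A, Inr (j,k) the entry c_jk of C.
  An algorithm is correct for every semiring and all input values iff it is correct
  in the free semiring over these variables, whose elements are multisets of words.\<close>

type_synonym var = "(nat \<times> nat) + (nat \<times> nat)"
type_synonym fsr = "var list multiset"

definition fadd :: "fsr \<Rightarrow> fsr \<Rightarrow> fsr" where
  "fadd p q = p + q"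

definition fmul :: "fsr \<Rightarrow> fsr \<Rightarrow> fsr" where
  "fmul p q = (\<Sum>x\<in>#p. image_mset (\<lambda>y. x @ y) q)"

definition input_vars :: "(nat \<times> nat) set \<Rightarrow> (nat \<times> nat) set \<Rightarrow> var set" where
  "input_vars A C = Inl ` A \<union> Inr ` C"

definition target :: "(nat \<times> nat) set \<Rightarrow> (nat \<times> nat) set \<Rightarrow> nat \<Rightarrow> nat \<Rightarrow> fsr" where
  "target A C i k = (\<Sum>j\<in>{j. (i, j) \<in> A \<and> (j, k) \<in> C}. {# [Inl (i, j), Inr (j, k)] #})"

text \<open>Internal memory: cells addressed by nat, at most M of them occupied.
  Disk: blocks addressed by nat, each with B slots (offsets < B).\<close>

type_synonym mem = "nat \<Rightarrow> fsr option"
type_synonym disk = "nat \<Rightarrow> nat \<Rightarrow> fsr option"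
type_synonym state = "mem \<times> disk"

datatype instr =
    Read nat "nat \<Rightarrow> nat"    \<comment> \<open>read disk block b; slot t goes to memory cell f t\<close>
  | Write nat "nat \<Rightarrow> nat"   \<comment> \<open>write block b; slot t receives memory cell f t\<close>
  | Add nat nat nat
  | Mul nat nat nat
  | Copy nat nat
  | Del nat

fun exec_instr :: "nat \<Rightarrow> state \<Rightarrow> instr \<Rightarrow> state option" where
  "exec_instr B (m, d) (Read b f) =
     (if inj_on f {..<B} then
        Some (\<lambda>a. if a \<in> f ` {t. t < B \<and> d b t \<noteq> None}
                   then d b (the_inv_into {..<B} f a) else m a, d)
      else None)"
| "exec_instr B (m, d) (Write b f) =
     Some (m, d(b := (\<lambda>t. if t < B then m (f t) else None)))"
| "exec_instr B (m, d) (Add x y z) =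
     (case (m x, m y) of (Some u, Some v) \<Rightarrow> Some (m(z := Some (fadd u v)), d) | _ \<Rightarrow> None)"
| "exec_instr B (m, d) (Mul x y z) =
     (case (m x, m y) of (Some u, Some v) \<Rightarrow> Some (m(z := Some (fmul u v)), d) | _ \<Rightarrow> None)"
| "exec_instr B (m, d) (Copy x z) =
     (case m x of Some u \<Rightarrow> Some (m(z := Some u), d) | None \<Rightarrow> None)"
| "exec_instr B (m, d) (Del x) = Some (m(x := None), d)"

definition mem_ok :: "nat \<Rightarrow> state \<Rightarrow> bool" where
  "mem_ok M s \<longleftrightarrow> finite {a. fst s a \<noteq> None} \<and> card {a. fst s a \<noteq> None} \<le> M"

fun run :: "nat \<Rightarrow> nat \<Rightarrow> state \<Rightarrow> instr list \<Rightarrow> state option" where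
  "run M B s [] = Some s"
| "run M B s (i # is) =
     (case exec_instr B s i of
        None \<Rightarrow> None
      | Some s' \<Rightarrow> if mem_ok M s' then run M B s' is else None)"

fun is_io :: "instr \<Rightarrow> bool" where
  "is_io (Read _ _) = True"
| "is_io (Write _ _) = True"
| "is_io _ = False"

definition io_cost :: "instr list \<Rightarrow> nat" where
  "io_cost prog = length (filter is_io prog)"

definition valid_layout :: "nat \<Rightarrow> (nat \<times> nat) set \<Rightarrow> (nat \<times> nat) set \<Rightarrow> (var \<Rightarrow> nat \<times> nat) \<Rightarrow> bool" where
  "valid_layout B A C pos \<longleftrightarrow> inj_on pos (input_vars A C) \<and> (\<forall>x\<in>input_vars A C. snd (pos x) < B)"

definition init_state :: "(nat \<times> nat) set \<Rightarrow> (nat \<times> nat) set \<Rightarrow> (var \<Rightarrow> nat \<times> nat) \<Rightarrow> state" where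
  "init_state A C pos =
     (\<lambda>_. None,
      \<lambda>b t. if \<exists>x\<in>input_vars A C. pos x = (b, t)
            then Some {# [THE x. x \<in> input_vars A C \<and> pos x = (b, t)] #} else None)"

definition computes_product ::
  "nat \<Rightarrow> nat \<Rightarrow> (nat \<times> nat) set \<Rightarrow> (nat \<times> nat) set \<Rightarrow> (var \<Rightarrow> nat \<times> nat) \<Rightarrow> instr list \<Rightarrow> bool" where
  "computes_product M B A C pos prog \<longleftrightarrow>
     (\<exists>m d. run M B (init_state A C pos) prog = Some (m, d) \<and>
        (\<forall>(i, k) \<in> prod_pattern A C. \<exists>b t. t < B \<and> d b t = Some (target A C i k)))"

end

(*
  The hard instance multiplies a dense s \<times> t block by a dense t \<times> s block with
  s = \<lfloor>\<surd>Z\<rfloor> and t = \<lfloor>N/s\<rfloor>: both factors have at most N entries, the product at most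
  Z, and there are s\<^sup>2 t \<ge> N\<surd>Z/4 elementary products a\<^sub>i\<^sub>j c\<^sub>j\<^sub>k.
  Computing in the free semiring, a value below the output (i, k) that contains the word
  a\<^sub>i\<^sub>j c\<^sub>j\<^sub>k can only arise by multiplying a copy of a\<^sub>i\<^sub>j with a copy of c\<^sub>j\<^sub>k.
  Cut the program into segments of k \<approx> M/B I/Os. The values touched by a segment (its
  initial memory and the blocks it reads or writes) number O(M), and every elementary
  product first realized in the segment is a triangle (i,j), (j,k), (i,k) whose sides are
  indexed by these values. A Loomis-Whitney type bound, at most 2X\<^sup>3\<^sup>/\<^sup>2 triangles over
  edge sets of size X, limits each segment to O(M\<^sup>3\<^sup>/\<^sup>2) new products, so
  \<Omega>(N\<surd>Z / (B\<surd>M)) I/Os are needed. Programs with fewer than k I/Os touch only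
  io_cost * B values outside their (empty) initial memory and are bounded directly.
*)

theory Submission
  imports Defs "HOL-Library.Discrete_Functions"
begin

section \<open>Counting triangles\<close>

definition triangles :: "('a \<times> 'b) set \<Rightarrow> ('b \<times> 'c) set \<Rightarrow> ('a \<times> 'c) set \<Rightarrow> ('a \<times> 'b \<times> 'c) set" where
  "triangles R S T = {(i, j, k). (i, j) \<in> R \<and> (j, k) \<in> S \<and> (i, k) \<in> T}"

lemma triangles_mono:
  "R \<subseteq> R' \<Longrightarrow> S \<subseteq> S' \<Longrightarrow> T \<subseteq> T' \<Longrightarrow> triangles R S T \<subseteq> triangles R' S' T'"
  unfolding triangles_def by auto

lemma finite_triangles: "finite R \<Longrightarrow> finite S \<Longrightarrow> finite (triangles R S T)"
proof -
  assume "finite R" "finite S"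
  moreover have "triangles R S T \<subseteq> fst ` R \<times> S"
    unfolding triangles_def by force
  ultimately show ?thesis using finite_subset by blast
qed

lemma finite_column: "finite R \<Longrightarrow> finite {i. (i, j) \<in> R}"
  by (rule finite_subset[of _ "fst ` R"]) force+

lemma finite_heavy_columns:
  fixes h :: real
  assumes R: "finite R" and h: "0 \<le> h"
  shows "finite {j. h < card {i. (i, j) \<in> R}}"
proof (rule finite_subset[OF _ finite_imageI[OF R]])
  show "{j. h < card {i. (i, j) \<in> R}} \<subseteq> snd ` R"
  proof
    fix j assume "j \<in> {j. h < card {i. (i, j) \<in> R}}"
    then have "card {i. (i, j) \<in> R} \<noteq> 0" using h by auto
    then obtain i where "(i, j) \<in> R" by fastforce
    then show "j \<in> snd ` R" by force
  qed
qed

lemma card_heavy_columns_le: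
  fixes h :: real
  assumes R: "finite R" and h: "0 \<le> h"
  shows "card {j. h < card {i. (i, j) \<in> R}} * h \<le> card R"
proof -
  define H where "H = {j. h < card {i. (i, j) \<in> R}}"
  have H: "finite H" unfolding H_def using R h by (rule finite_heavy_columns)
  have "card H * h = (\<Sum>j\<in>H. h)" by simp
  also have "\<dots> \<le> (\<Sum>j\<in>H. real (card {i. (i, j) \<in> R}))"
    by (rule sum_mono) (simp add: H_def less_imp_le)
  also have "\<dots> = (\<Sum>j\<in>H. card ({i. (i, j) \<in> R} \<times> {j}))"
    by (simp add: card_cartesian_product)
  also have "\<dots> = card (\<Union>j\<in>H. {i. (i, j) \<in> R} \<times> {j})"
    using H finite_column[OF R] by (subst card_UN_disjoint) auto
  also have "\<dots> \<le> card R" using R by (intro of_nat_mono card_mono) auto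
  finally show ?thesis unfolding H_def .
qed

lemma card_triangles_middle_in_le:
  assumes T: "finite T" and H: "finite H"
  shows "card (triangles R S T \<inter> {(i, j, k). j \<in> H}) \<le> card T * card H"
proof -
  have "triangles R S T \<inter> {(i, j, k). j \<in> H} \<subseteq> (\<lambda>((i, k), j). (i, j, k)) ` (T \<times> H)"
  proof
    fix x assume "x \<in> triangles R S T \<inter> {(i, j, k). j \<in> H}"
    then obtain i j k where "x = (i, j, k)" "(i, k) \<in> T" "j \<in> H"
      unfolding triangles_def by auto
    then show "x \<in> (\<lambda>((i, k), j). (i, j, k)) ` (T \<times> H)"
      by (intro image_eqI[of _ _ "((i, k), j)"]) auto
  qed
  then have "card (triangles R S T \<inter> {(i, j, k). j \<in> H}) \<le> card ((\<lambda>((i, k), j). (i, j, k)) ` (T \<times> H))"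
    using T H by (intro card_mono) auto
  also have "\<dots> \<le> card T * card H"
    using card_image_le[of "T \<times> H"] T H by (simp add: card_cartesian_product)
  finally show ?thesis .
qed

lemma card_triangles_middle_notin_le:
  fixes h :: real
  assumes R: "finite R" and S: "finite S"
    and light: "\<And>j. j \<notin> H \<Longrightarrow> card {i. (i, j) \<in> R} \<le> h" and h: "0 \<le> h"
  shows "card (triangles R S T \<inter> {(i, j, k). j \<notin> H}) \<le> card S * h"
proof -
  let ?col = "\<lambda>j. {i. (i, j) \<in> R \<and> j \<notin> H}"
  have "triangles R S T \<inter> {(i, j, k). j \<notin> H} \<subseteq> (\<Union>(j, k)\<in>S. (\<lambda>i. (i, j, k)) ` ?col j)"
    unfolding triangles_def by auto
  then have "card (triangles R S T \<inter> {(i, j, k). j \<notin> H}) \<le> card (\<Union>(j, k)\<in>S. (\<lambda>i. (i, j, k)) ` ?col j)"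
    using S finite_column[OF R] by (intro card_mono) auto
  also have "\<dots> \<le> (\<Sum>(j, k)\<in>S. card ((\<lambda>i. (i, j, k)) ` ?col j))"
    using card_UN_le[OF S] by (simp add: case_prod_unfold)
  also have "\<dots> = (\<Sum>(j, k)\<in>S. card (?col j))"
    by (intro sum.cong refl) (auto simp: card_image inj_on_def)
  finally have "real (card (triangles R S T \<inter> {(i, j, k). j \<notin> H})) \<le> (\<Sum>(j, k)\<in>S. real (card (?col j)))"
    by (simp add: case_prod_unfold flip: of_nat_sum)
  also have "\<dots> \<le> (\<Sum>(j, k)\<in>S. h)"
  proof (intro sum_mono, clarify)
    fix j k
    show "real (card (?col j)) \<le> h"
      using light[of j] h by (cases "j \<in> H") auto
  qed
  finally show ?thesis by simp
qed

(* Heavy middle vertices (more than h neighbours in R) are few, light ones have few triangles. *)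
lemma card_triangles_le_threshold:
  fixes R :: "('a \<times> 'b) set" and h :: real
  assumes R: "finite R" and S: "finite S" and T: "finite T" and h: "0 < h"
  shows "card (triangles R S T) \<le> card T * card R / h + card S * h"
proof -
  define H where "H = {j. h < card {i. (i, j) \<in> R}}"
  have "finite H"
    unfolding H_def using R h by (intro finite_heavy_columns) auto
  have "real (card (triangles R S T \<inter> {(i, j, k). j \<in> H})) \<le> real (card T) * real (card H)"
    using card_triangles_middle_in_le[OF T \<open>finite H\<close>, of R S]
    by (simp only: of_nat_mult[symmetric] of_nat_le_iff)
  also have "\<dots> \<le> real (card T) * (card R / h)"
    using card_heavy_columns_le[OF R, of h] h by (intro mult_left_mono) (auto simp: H_def field_simps)
  finally have heavy: "card (triangles R S T \<inter> {(i, j, k). j \<in> H}) \<le> card T * card R / h" by simp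
  have light: "card (triangles R S T \<inter> {(i, j, k). j \<notin> H}) \<le> card S * h"
    using h by (intro card_triangles_middle_notin_le[OF R S]) (auto simp: H_def)
  have "card (triangles R S T)
          = card ((triangles R S T \<inter> {(i, j, k). j \<in> H}) \<union> (triangles R S T \<inter> {(i, j, k). j \<notin> H}))"
    by (rule arg_cong[where f = card]) auto
  also have "\<dots> \<le> card (triangles R S T \<inter> {(i, j, k). j \<in> H}) + card (triangles R S T \<inter> {(i, j, k). j \<notin> H})"
    by (rule card_Un_le)
  finally show ?thesis using heavy light by linarith
qed

lemma card_triangles_le:
  fixes X :: real
  assumes "finite R" "finite S" "finite T" and "card R \<le> X" "card S \<le> X" "card T \<le> X"
  shows "card (triangles R S T) \<le> 2 * X * sqrt X"
proof (cases "X = 0")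
  case True
  then have "triangles R S T = {}" using assms(1,4) by (simp add: triangles_def)
  then show ?thesis using True by simp
next
  case False
  then have X: "0 < X" using assms(4) by linarith
  have "card (triangles R S T) \<le> card T * card R / sqrt X + card S * sqrt X"
    by (rule card_triangles_le_threshold[OF assms(1-3)]) (use X in simp)
  also have "\<dots> \<le> X * X / sqrt X + X * sqrt X"
  proof (rule add_mono)
    show "card T * card R / sqrt X \<le> X * X / sqrt X"
      using assms mult_mono[of "real (card T)" X "real (card R)" X]
      by (intro divide_right_mono) auto
    show "card S * sqrt X \<le> X * sqrt X"
      using assms by (intro mult_right_mono) auto
  qed
  also have "X * X / sqrt X = X * sqrt X"
    using X by (simp add: real_div_sqrt flip: times_divide_eq_right)
  finally show ?thesis by simp
qed

section \<open>Elementary products in the free semiring\<close>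

definition prod_word :: "nat \<Rightarrow> nat \<Rightarrow> nat \<Rightarrow> var list" where
  "prod_word i j k = [Inl (i, j), Inr (j, k)]"

lemma mem_fmul_iff: "w \<in># fmul u v \<longleftrightarrow> (\<exists>a\<in>#u. \<exists>b\<in>#v. w = a @ b)"
  unfolding fmul_def by auto

lemma mem_target_iff:
  assumes "finite A"
  shows "w \<in># target A C i k \<longleftrightarrow> (\<exists>j. (i, j) \<in> A \<and> (j, k) \<in> C \<and> w = prod_word i j k)"
proof -
  have "finite {j. (i, j) \<in> A \<and> (j, k) \<in> C}"
    by (rule finite_subset[of _ "snd ` A"]) (force intro: assms)+
  then show ?thesis
    unfolding target_def prod_word_def by (auto simp: set_mset_sum)
qed

lemma fmul_le_target_factors:
  assumes A: "finite A" and u: "[] \<notin># u" and v: "[] \<notin># v"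
    and le: "fmul u v \<subseteq># target A C i k" and w: "prod_word i j k \<in># fmul u v"
  shows "set_mset u = {[Inl (i, j)]} \<and> set_mset v = {[Inr (j, k)]}"
proof -
  have shape: "\<exists>j'. a @ b = prod_word i j' k" if "a \<in># u" "b \<in># v" for a b
  proof -
    have "a @ b \<in># target A C i k"
      using that mem_fmul_iff by (blast intro: mset_subset_eqD[OF le])
    then show ?thesis using mem_target_iff[OF A] by blast
  qed
  obtain a b where a: "a \<in># u" and b: "b \<in># v" and ab: "prod_word i j k = a @ b"
    using w mem_fmul_iff by metis
  have "a \<noteq> []" "b \<noteq> []" using a b u v by auto
  with ab have a_eq: "a = [Inl (i, j)]" and b_eq: "b = [Inr (j, k)]"
    unfolding prod_word_def by (cases a; cases b; auto simp: Cons_eq_append_conv)+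
  have "a' = [Inl (i, j)]" if a': "a' \<in># u" for a'
  proof -
    obtain j' where "a' @ b = prod_word i j' k" using shape[OF a' b] by blast
    moreover have "a' \<noteq> []" using a' u by auto
    ultimately show ?thesis unfolding b_eq prod_word_def by (cases a') (auto simp: Cons_eq_append_conv)
  qed
  moreover have "b' = [Inr (j, k)]" if b': "b' \<in># v" for b'
  proof -
    obtain j' where "a @ b' = prod_word i j' k" using shape[OF a b'] by blast
    moreover have "b' \<noteq> []" using b' v by auto
    ultimately show ?thesis unfolding a_eq prod_word_def by (cases b') (auto simp: Cons_eq_append_conv)
  qed
  ultimately show ?thesis using a b a_eq b_eq by blast
qed

definition disk_vals :: "state \<Rightarrow> fsr set" where
  "disk_vals \<sigma> = (\<Union>b. ran (snd \<sigma> b))"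

definition vals :: "state \<Rightarrow> fsr set" where
  "vals \<sigma> = ran (fst \<sigma>) \<union> disk_vals \<sigma>"

(* The empty word is the unit of the free semiring. Programs cannot create it, and its absence
   is what splits a product below a target into two input entries (fmul_le_target_factors). *)
definition no_empty_words :: "state \<Rightarrow> bool" where
  "no_empty_words \<sigma> \<longleftrightarrow> (\<forall>v \<in> vals \<sigma>. [] \<notin># v)"

definition realized :: "(nat \<times> nat) set \<Rightarrow> (nat \<times> nat) set \<Rightarrow> fsr set \<Rightarrow> (nat \<times> nat \<times> nat) set" where
  "realized A C V = {(i, j, k). \<exists>v\<in>V. v \<subseteq># target A C i k \<and> prod_word i j k \<in># v}"

(* set_mset v = {[x]} says that v is a nonzero multiple of the input entry x. *)
definition atoms :: "fsr set \<Rightarrow> var set" where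
  "atoms V = {x. \<exists>v\<in>V. set_mset v = {[x]}}"

lemma realized_mono: "V \<subseteq> W \<Longrightarrow> realized A C V \<subseteq> realized A C W"
  unfolding realized_def by blast

lemma realized_Un: "realized A C (V \<union> W) = realized A C V \<union> realized A C W"
  unfolding realized_def by blast

lemma atoms_mono: "V \<subseteq> W \<Longrightarrow> atoms V \<subseteq> atoms W"
  unfolding atoms_def by blast

lemma atoms_Un: "atoms (V \<union> W) = atoms V \<union> atoms W"
  unfolding atoms_def by blast

lemma prod_word_inj: "prod_word i j k = prod_word i' j' k' \<longleftrightarrow> i = i' \<and> j = j' \<and> k = k'"
  unfolding prod_word_def by auto

lemma atoms_empty [simp]: "atoms {} = {}"
  unfolding atoms_def by blast

lemma atoms_insert [simp]: "atoms (insert v V) = {x. set_mset v = {[x]}} \<union> atoms V"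
  unfolding atoms_def by blast

lemma realized_subset_triangles_UNIV:
  assumes "finite A"
  shows "realized A C V \<subseteq> triangles A C UNIV"
proof clarify
  fix i j k assume "(i, j, k) \<in> realized A C V"
  then obtain v where "v \<subseteq># target A C i k" "prod_word i j k \<in># v"
    unfolding realized_def by blast
  then have "prod_word i j k \<in># target A C i k" by (rule mset_subset_eqD)
  then show "(i, j, k) \<in> triangles A C UNIV"
    unfolding mem_target_iff[OF assms] prod_word_inj triangles_def by auto
qed

lemma realized_add: "realized A C {u + v} \<subseteq> realized A C {u, v}"
proof clarify
  fix i j k assume "(i, j, k) \<in> realized A C {u + v}"
  then have le: "u + v \<subseteq># target A C i k" and w: "prod_word i j k \<in># u + v"
    unfolding realized_def by auto
  have "u \<subseteq># target A C i k" "v \<subseteq># target A C i k"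
    using le by (meson mset_subset_eq_add_left mset_subset_eq_add_right subset_mset.order_trans)+
  then show "(i, j, k) \<in> realized A C {u, v}"
    using w unfolding realized_def by auto
qed

lemma atoms_add: "atoms {u + v} \<subseteq> atoms {u, v}"
  unfolding atoms_def by (auto simp: set_eq_iff)

lemma realized_fmul:
  assumes "finite A" "[] \<notin># u" "[] \<notin># v"
  shows "realized A C {fmul u v} \<subseteq> triangles (Inl -` atoms {u}) (Inr -` atoms {v}) UNIV"
  using fmul_le_target_factors[OF assms] unfolding realized_def triangles_def atoms_def by auto

lemma atoms_fmul:
  assumes "[] \<notin># u" "[] \<notin># v"
  shows "atoms {fmul u v} = {}"
proof -
  have "[x] \<notin># fmul u v" for x
    using assms by (auto simp: mem_fmul_iff Cons_eq_append_conv)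
  then show ?thesis unfolding atoms_def by auto
qed

section \<open>An invariant of program segments\<close>

(* S collects the values a segment starts with in memory and those moved by its I/Os. *)
definition segment_inv :: "(nat \<times> nat) set \<Rightarrow> (nat \<times> nat) set \<Rightarrow> state \<Rightarrow> state \<Rightarrow> fsr set \<Rightarrow> bool" where
  "segment_inv A C \<sigma>0 \<sigma> S \<longleftrightarrow>
     realized A C (vals \<sigma>) - realized A C (vals \<sigma>0) \<subseteq> triangles (Inl -` atoms S) (Inr -` atoms S) UNIV \<and>
     atoms (ran (fst \<sigma>)) \<subseteq> atoms S \<and>
     (\<forall>b t v. snd \<sigma> b t = Some v \<longrightarrow> snd \<sigma>0 b t = Some v \<or> v \<in> S)"

lemma segment_inv_start: "segment_inv A C \<sigma> \<sigma> (ran (fst \<sigma>))"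
  unfolding segment_inv_def by blast

lemma triangles_atoms_mono:
  "S \<subseteq> S' \<Longrightarrow> triangles (Inl -` atoms S) (Inr -` atoms S) UNIV \<subseteq> triangles (Inl -` atoms S') (Inr -` atoms S') UNIV"
  by (intro triangles_mono vimage_mono atoms_mono) auto

lemma segment_inv_no_new_values:
  assumes inv: "segment_inv A C \<sigma>0 \<sigma> S" and ne: "no_empty_words \<sigma>" and "S \<subseteq> S'"
    and vals: "vals \<sigma>' \<subseteq> vals \<sigma>"
    and mem: "ran (fst \<sigma>') \<subseteq> ran (fst \<sigma>) \<union> S'"
    and disk: "\<And>b t v. snd \<sigma>' b t = Some v \<Longrightarrow> snd \<sigma> b t = Some v \<or> v \<in> S'"
  shows "segment_inv A C \<sigma>0 \<sigma>' S' \<and> no_empty_words \<sigma>'"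
proof -
  have "realized A C (vals \<sigma>') - realized A C (vals \<sigma>0) \<subseteq> triangles (Inl -` atoms S') (Inr -` atoms S') UNIV"
    using realized_mono[OF vals] inv triangles_atoms_mono[OF \<open>S \<subseteq> S'\<close>]
    unfolding segment_inv_def by blast
  moreover have "atoms (ran (fst \<sigma>')) \<subseteq> atoms S'"
    using atoms_mono[OF mem] atoms_mono[OF \<open>S \<subseteq> S'\<close>] inv
    unfolding atoms_Un segment_inv_def by blast
  moreover have "snd \<sigma>0 b t = Some v \<or> v \<in> S'" if "snd \<sigma>' b t = Some v" for b t v
    using disk[OF that] inv \<open>S \<subseteq> S'\<close> unfolding segment_inv_def by blast
  moreover have "no_empty_words \<sigma>'"
    using ne vals unfolding no_empty_words_def by blast
  ultimately show ?thesis unfolding segment_inv_def by blast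
qed

lemma segment_inv_new_value:
  assumes inv: "segment_inv A C \<sigma>0 \<sigma> S" and ne: "no_empty_words \<sigma>"
    and disk: "snd \<sigma>' = snd \<sigma>" and mem: "ran (fst \<sigma>') \<subseteq> insert w (ran (fst \<sigma>))"
    and w: "[] \<notin># w"
    and realized_w: "realized A C {w} \<subseteq> realized A C (vals \<sigma>) \<union> triangles (Inl -` atoms S) (Inr -` atoms S) UNIV"
    and atoms_w: "atoms {w} \<subseteq> atoms S"
  shows "segment_inv A C \<sigma>0 \<sigma>' S \<and> no_empty_words \<sigma>'"
proof -
  have "disk_vals \<sigma>' = disk_vals \<sigma>"
    unfolding disk_vals_def disk ..
  then have vals: "vals \<sigma>' \<subseteq> {w} \<union> vals \<sigma>"
    using mem unfolding vals_def by blast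
  have "realized A C (vals \<sigma>') \<subseteq> realized A C (vals \<sigma>) \<union> triangles (Inl -` atoms S) (Inr -` atoms S) UNIV"
    using realized_mono[OF vals] realized_w unfolding realized_Un by blast
  then have "realized A C (vals \<sigma>') - realized A C (vals \<sigma>0) \<subseteq> triangles (Inl -` atoms S) (Inr -` atoms S) UNIV"
    using inv[unfolded segment_inv_def, THEN conjunct1] by blast
  moreover have "atoms (ran (fst \<sigma>')) \<subseteq> atoms S"
  proof -
    have "atoms (ran (fst \<sigma>')) \<subseteq> atoms {w} \<union> atoms (ran (fst \<sigma>))"
      using atoms_mono[OF mem] by simp
    then show ?thesis
      using atoms_w inv[unfolded segment_inv_def, THEN conjunct2, THEN conjunct1] by blast
  qed
  moreover have "no_empty_words \<sigma>'"
    using ne vals w unfolding no_empty_words_def by blast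
  ultimately show ?thesis using inv unfolding segment_inv_def disk by blast
qed

lemma card_ran_le_card_dom:
  assumes "finite (dom m)"
  shows "card (ran m) \<le> card (dom m)"
proof -
  have "ran m = (\<lambda>a. the (m a)) ` dom m" unfolding ran_def dom_def by force
  then show ?thesis using assms by (simp add: card_image_le)
qed

lemma card_ran_restrict_lessThan: "finite (ran (m |` {..<n})) \<and> card (ran (m |` {..<n})) \<le> n"
proof -
  have "dom (m |` {..<n}) \<subseteq> {..<n}" by auto
  then have "finite (dom (m |` {..<n}))" "card (dom (m |` {..<n})) \<le> n"
    using finite_subset card_mono[of "{..<n}"] by fastforce+
  then show ?thesis using card_ran_le_card_dom finite_ran by fastforce
qed

lemma mem_ok_card_ran: "mem_ok M \<sigma> \<Longrightarrow> finite (ran (fst \<sigma>)) \<and> card (ran (fst \<sigma>)) \<le> M"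
  unfolding mem_ok_def using card_ran_le_card_dom finite_ran by (fastforce simp: dom_def)

lemma ran_map_upd_subset: "ran (m(a \<mapsto> b)) \<subseteq> insert b (ran m)"
  unfolding ran_def by auto

lemma ran_map_delete_subset: "ran (m(a := None)) \<subseteq> ran m"
  unfolding ran_def by auto

lemma exec_Read:
  assumes "exec_instr B \<sigma> (Read b f) = Some \<sigma>'"
  shows "snd \<sigma>' = snd \<sigma>"
    and "ran (fst \<sigma>') \<subseteq> ran (fst \<sigma>) \<union> ran (snd \<sigma> b |` {..<B})"
    and "ran (snd \<sigma> b |` {..<B}) \<subseteq> ran (fst \<sigma>')"
proof -
  obtain m d where \<sigma>: "\<sigma> = (m, d)" by fastforce
  define D where "D = f ` {t. t < B \<and> d b t \<noteq> None}"
  have inj: "inj_on f {..<B}" using assms \<sigma> by (auto split: if_splits)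
  then have \<sigma>': "\<sigma>' = (\<lambda>a. if a \<in> D then d b (the_inv_into {..<B} f a) else m a, d)"
    using assms \<sigma> unfolding D_def by auto
  have read: "the_inv_into {..<B} f (f t) = t" if "t < B" for t
    using inj that by (simp add: the_inv_into_f_f)
  show "snd \<sigma>' = snd \<sigma>" using \<sigma> \<sigma>' by simp
  show "ran (fst \<sigma>') \<subseteq> ran (fst \<sigma>) \<union> ran (snd \<sigma> b |` {..<B})"
    using read unfolding \<sigma> \<sigma>' D_def by (auto simp: ran_def restrict_map_def)
  show "ran (snd \<sigma> b |` {..<B}) \<subseteq> ran (fst \<sigma>')"
  proof
    fix v assume "v \<in> ran (snd \<sigma> b |` {..<B})"
    then obtain t where "t < B" "d b t = Some v"
      unfolding \<sigma> by (auto simp: ran_def restrict_map_def split: if_splits)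
    then have "fst \<sigma>' (f t) = Some v" using read unfolding \<sigma>' D_def by auto
    then show "v \<in> ran (fst \<sigma>')" by (rule ranI)
  qed
qed

lemma exec_Write:
  assumes "exec_instr B \<sigma> (Write b f) = Some \<sigma>'"
  shows "\<sigma>' = (fst \<sigma>, (snd \<sigma>)(b := (fst \<sigma> \<circ> f) |` {..<B}))"
  using assms by (cases \<sigma>) (auto simp: restrict_map_def fun_eq_iff)

lemma segment_inv_Read:
  assumes ex: "exec_instr B \<sigma> (Read b f) = Some \<sigma>'"
    and inv: "segment_inv A C \<sigma>0 \<sigma> S" and ne: "no_empty_words \<sigma>"
  shows "segment_inv A C \<sigma>0 \<sigma>' (S \<union> ran (snd \<sigma> b |` {..<B})) \<and> no_empty_words \<sigma>'"
proof (rule segment_inv_no_new_values[OF inv ne])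
  note read = exec_Read[OF ex]
  have "ran (snd \<sigma> b |` {..<B}) \<subseteq> disk_vals \<sigma>"
    unfolding disk_vals_def ran_def restrict_map_def by auto
  then show "vals \<sigma>' \<subseteq> vals \<sigma>"
    using read(1,2) unfolding vals_def disk_vals_def by auto
  show "ran (fst \<sigma>') \<subseteq> ran (fst \<sigma>) \<union> (S \<union> ran (snd \<sigma> b |` {..<B}))"
    using read(2) by auto
qed (use exec_Read(1)[OF ex] in auto)

lemma segment_inv_Write:
  assumes ex: "exec_instr B \<sigma> (Write b f) = Some \<sigma>'"
    and inv: "segment_inv A C \<sigma>0 \<sigma> S" and ne: "no_empty_words \<sigma>"
  shows "segment_inv A C \<sigma>0 \<sigma>' (S \<union> ran ((fst \<sigma> \<circ> f) |` {..<B})) \<and> no_empty_words \<sigma>'"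
proof (rule segment_inv_no_new_values[OF inv ne])
  define W where "W = (fst \<sigma> \<circ> f) |` {..<B}"
  have \<sigma>': "\<sigma>' = (fst \<sigma>, (snd \<sigma>)(b := W))"
    using exec_Write[OF ex] unfolding W_def .
  have "ran W \<subseteq> ran (fst \<sigma>)" unfolding W_def ran_def restrict_map_def by auto
  moreover have "disk_vals \<sigma>' \<subseteq> disk_vals \<sigma> \<union> ran W"
    unfolding disk_vals_def \<sigma>' by (auto simp: ran_def split: if_splits)
  ultimately show "vals \<sigma>' \<subseteq> vals \<sigma>"
    unfolding vals_def \<sigma>' by auto
  show "snd \<sigma> b' t = Some v \<or> v \<in> S \<union> ran W" if "snd \<sigma>' b' t = Some v" for b' t v
    using that unfolding \<sigma>' by (cases "b' = b") (auto intro: ranI)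
qed (auto simp: exec_Write[OF ex])

lemma segment_inv_Add:
  assumes ex: "exec_instr B \<sigma> (Add x y z) = Some \<sigma>'"
    and inv: "segment_inv A C \<sigma>0 \<sigma> S" and ne: "no_empty_words \<sigma>"
  shows "segment_inv A C \<sigma>0 \<sigma>' S \<and> no_empty_words \<sigma>'"
proof -
  obtain m d where \<sigma>: "\<sigma> = (m, d)" by fastforce
  obtain u v where uv: "m x = Some u" "m y = Some v" and \<sigma>': "\<sigma>' = (m(z \<mapsto> u + v), d)"
    using ex \<sigma> by (auto simp: fadd_def split: option.splits)
  have uv_ran: "{u, v} \<subseteq> ran m" using uv by (auto intro: ranI)
  show ?thesis
  proof (rule segment_inv_new_value[OF inv ne])
    show "realized A C {u + v} \<subseteq> realized A C (vals \<sigma>) \<union> triangles (Inl -` atoms S) (Inr -` atoms S) UNIV"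
      using realized_add[of A C u v] realized_mono[of "{u, v}" "vals \<sigma>" A C] uv_ran
      unfolding vals_def \<sigma> by auto
    have "atoms {u + v} \<subseteq> atoms (ran m)"
      using atoms_add[of u v] atoms_mono[OF uv_ran] by (rule order_trans)
    then show "atoms {u + v} \<subseteq> atoms S"
      using inv unfolding segment_inv_def \<sigma> by auto
    show "[] \<notin># u + v"
      using ne uv_ran unfolding no_empty_words_def vals_def \<sigma> by auto
  qed (use ran_map_upd_subset[of m z "u + v"] in \<open>auto simp: \<sigma> \<sigma>'\<close>)
qed

lemma segment_inv_Mul:
  assumes A: "finite A" and ex: "exec_instr B \<sigma> (Mul x y z) = Some \<sigma>'"
    and inv: "segment_inv A C \<sigma>0 \<sigma> S" and ne: "no_empty_words \<sigma>"
  shows "segment_inv A C \<sigma>0 \<sigma>' S \<and> no_empty_words \<sigma>'"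
proof -
  obtain m d where \<sigma>: "\<sigma> = (m, d)" by fastforce
  obtain u v where uv: "m x = Some u" "m y = Some v" and \<sigma>': "\<sigma>' = (m(z \<mapsto> fmul u v), d)"
    using ex \<sigma> by (auto split: option.splits)
  have "u \<in> ran m" "v \<in> ran m" using uv by (auto intro: ranI)
  then have nonempty: "[] \<notin># u" "[] \<notin># v"
    using ne unfolding no_empty_words_def vals_def \<sigma> by auto
  have "atoms (ran m) \<subseteq> atoms S"
    using inv unfolding segment_inv_def \<sigma> by simp
  then have "atoms {u} \<subseteq> atoms S" "atoms {v} \<subseteq> atoms S"
    using order_trans[OF atoms_mono] \<open>u \<in> ran m\<close> \<open>v \<in> ran m\<close> by (metis empty_subsetI insert_subset)+
  then have "triangles (Inl -` atoms {u}) (Inr -` atoms {v}) UNIV \<subseteq> triangles (Inl -` atoms S) (Inr -` atoms S) UNIV"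
    by (intro triangles_mono vimage_mono) auto
  then have "realized A C {fmul u v} \<subseteq> triangles (Inl -` atoms S) (Inr -` atoms S) UNIV"
    using realized_fmul[OF A nonempty, of C] by (rule order_trans[rotated])
  then show ?thesis
  proof (intro segment_inv_new_value[OF inv ne])
    show "[] \<notin># fmul u v" using nonempty by (auto simp: mem_fmul_iff)
  qed (use ran_map_upd_subset[of m z "fmul u v"] atoms_fmul[OF nonempty] in \<open>auto simp: \<sigma> \<sigma>'\<close>)
qed

lemma segment_inv_Copy:
  assumes ex: "exec_instr B \<sigma> (Copy x z) = Some \<sigma>'"
    and inv: "segment_inv A C \<sigma>0 \<sigma> S" and ne: "no_empty_words \<sigma>"
  shows "segment_inv A C \<sigma>0 \<sigma>' S \<and> no_empty_words \<sigma>'"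
proof -
  obtain m d where \<sigma>: "\<sigma> = (m, d)" by fastforce
  obtain u where u: "m x = Some u" and \<sigma>': "\<sigma>' = (m(z \<mapsto> u), d)"
    using ex \<sigma> by (auto split: option.splits)
  have "ran (fst \<sigma>') \<subseteq> ran (fst \<sigma>)"
    using ran_map_upd_subset[of m z u] u unfolding \<sigma> \<sigma>' by (auto intro: ranI)
  then show ?thesis
    by (intro segment_inv_no_new_values[OF inv ne]) (auto simp: \<sigma> \<sigma>' vals_def disk_vals_def)
qed

lemma segment_inv_Del:
  assumes ex: "exec_instr B \<sigma> (Del x) = Some \<sigma>'"
    and inv: "segment_inv A C \<sigma>0 \<sigma> S" and ne: "no_empty_words \<sigma>"
  shows "segment_inv A C \<sigma>0 \<sigma>' S \<and> no_empty_words \<sigma>'"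
proof -
  obtain m d where \<sigma>: "\<sigma> = (m, d)" by fastforce
  have \<sigma>': "\<sigma>' = (m(x := None), d)" using ex \<sigma> by simp
  have "ran (fst \<sigma>') \<subseteq> ran (fst \<sigma>)"
    using ran_map_delete_subset unfolding \<sigma> \<sigma>' by simp
  then show ?thesis
    by (intro segment_inv_no_new_values[OF inv ne]) (auto simp: \<sigma> \<sigma>' vals_def disk_vals_def)
qed

lemma card_transfer_le:
  assumes "mem_ok M \<sigma>" "ran (g |` {..<B}) \<subseteq> ran (fst \<sigma>)"
  shows "finite (ran (g |` {..<B})) \<and> card (ran (g |` {..<B})) \<le> min B M"
proof -
  have "card (ran (g |` {..<B})) \<le> card (ran (fst \<sigma>))"
    using mem_ok_card_ran[OF assms(1)] assms(2) by (intro card_mono) auto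
  then show ?thesis using card_ran_restrict_lessThan[of g B] mem_ok_card_ran[OF assms(1)] by simp
qed

lemma segment_inv_exec:
  assumes A: "finite A" and ex: "exec_instr B \<sigma> ins = Some \<sigma>'" and ok: "mem_ok M \<sigma>'"
    and inv: "segment_inv A C \<sigma>0 \<sigma> S" and ne: "no_empty_words \<sigma>" and S: "finite S"
  obtains S' where "finite S'" "card S' \<le> card S + (if is_io ins then min B M else 0)"
    and "segment_inv A C \<sigma>0 \<sigma>' S'" "no_empty_words \<sigma>'"
proof (cases ins)
  case (Read b f)
  define V where "V = ran (snd \<sigma> b |` {..<B})"
  have "finite V" "card V \<le> min B M"
    using card_transfer_le[OF ok exec_Read(3)[OF ex[unfolded Read]]] unfolding V_def by auto
  then show thesis
    using that[of "S \<union> V"] segment_inv_Read[OF ex[unfolded Read] inv ne] S card_Un_le[of S V] Read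
    unfolding V_def by auto
next
  case (Write b f)
  define V where "V = ran ((fst \<sigma> \<circ> f) |` {..<B})"
  have "V \<subseteq> ran (fst \<sigma>')"
    unfolding V_def exec_Write[OF ex[unfolded Write]] ran_def restrict_map_def by auto
  then have "finite V" "card V \<le> min B M"
    using card_transfer_le[OF ok] unfolding V_def by auto
  then show thesis
    using that[of "S \<union> V"] segment_inv_Write[OF ex[unfolded Write] inv ne] S card_Un_le[of S V] Write
    unfolding V_def by auto
next
  case (Add x y z)
  then show thesis using that[of S] segment_inv_Add[OF ex[unfolded Add] inv ne] S by auto
next
  case (Mul x y z)
  then show thesis using that[of S] segment_inv_Mul[OF A ex[unfolded Mul] inv ne] S by auto
next
  case (Copy x z)
  then show thesis using that[of S] segment_inv_Copy[OF ex[unfolded Copy] inv ne] S by auto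
next
  case (Del x)
  then show thesis using that[of S] segment_inv_Del[OF ex[unfolded Del] inv ne] S by auto
qed

lemma run_Cons_eq_Some:
  "run M B \<sigma> (ins # prog) = Some \<sigma>1 \<longleftrightarrow>
     (\<exists>\<sigma>'. exec_instr B \<sigma> ins = Some \<sigma>' \<and> mem_ok M \<sigma>' \<and> run M B \<sigma>' prog = Some \<sigma>1)"
  by (auto split: option.splits)

lemma run_append: "run M B \<sigma> (p @ q) = Option.bind (run M B \<sigma> p) (\<lambda>\<sigma>'. run M B \<sigma>' q)"
  by (induction p arbitrary: \<sigma>) (auto split: option.splits)

lemma run_mem_ok: "run M B \<sigma> prog = Some \<sigma>1 \<Longrightarrow> mem_ok M \<sigma> \<Longrightarrow> mem_ok M \<sigma>1"
  by (induction prog arbitrary: \<sigma>) (auto split: option.splits if_splits)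

lemma io_cost_Nil [simp]: "io_cost [] = 0"
  by (simp add: io_cost_def)

lemma io_cost_Cons [simp]: "io_cost (ins # prog) = (if is_io ins then 1 else 0) + io_cost prog"
  by (simp add: io_cost_def)

lemma io_cost_append [simp]: "io_cost (p @ q) = io_cost p + io_cost q"
  by (simp add: io_cost_def)

lemma segment_inv_run:
  assumes A: "finite A"
  shows "run M B \<sigma> prog = Some \<sigma>1 \<Longrightarrow> no_empty_words \<sigma> \<Longrightarrow> finite S \<Longrightarrow> segment_inv A C \<sigma>0 \<sigma> S \<Longrightarrow>
    \<exists>S'. finite S' \<and> card S' \<le> card S + io_cost prog * min B M \<and>
      segment_inv A C \<sigma>0 \<sigma>1 S' \<and> no_empty_words \<sigma>1"
proof (induction prog arbitrary: \<sigma> S)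
  case Nil
  then show ?case by auto
next
  case (Cons ins prog)
  obtain \<sigma>' where ex: "exec_instr B \<sigma> ins = Some \<sigma>'" and ok: "mem_ok M \<sigma>'"
    and run: "run M B \<sigma>' prog = Some \<sigma>1"
    using Cons.prems(1) unfolding run_Cons_eq_Some by blast
  obtain S' where S': "finite S'" "card S' \<le> card S + (if is_io ins then min B M else 0)"
    "segment_inv A C \<sigma>0 \<sigma>' S'" "no_empty_words \<sigma>'"
    using segment_inv_exec[OF A ex ok Cons.prems(4,2,3)] .
  obtain S'' where "finite S''" "card S'' \<le> card S' + io_cost prog * min B M"
    "segment_inv A C \<sigma>0 \<sigma>1 S''" "no_empty_words \<sigma>1"
    using Cons.IH[OF run S'(4,1,3)] by blast
  then show ?case using S'(2) by (intro exI[of _ S'']) auto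
qed

lemma run_segment_inv:
  assumes "finite A" "run M B \<sigma> prog = Some \<sigma>1" "no_empty_words \<sigma>" "mem_ok M \<sigma>"
  obtains S where "finite S" "card S \<le> card (ran (fst \<sigma>)) + io_cost prog * min B M"
    and "segment_inv A C \<sigma> \<sigma>1 S" "no_empty_words \<sigma>1"
  using segment_inv_run[OF assms(1,2,3) _ segment_inv_start] mem_ok_card_ran[OF assms(4)] that
  by blast

section \<open>Elementary products realized by a segment\<close>

definition output_index :: "fsr \<Rightarrow> nat \<times> nat" where
  "output_index v = (let w = SOME w. w \<in># v in (fst (projl (hd w)), snd (projr (last w))))"

lemma output_index_eq:
  assumes "finite A" "v \<subseteq># target A C i k" "prod_word i j k \<in># v"
  shows "output_index v = (i, k)"
proof -
  have "(SOME w. w \<in># v) \<in># v" using assms(3) by (rule someI)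
  then have "(SOME w. w \<in># v) \<in># target A C i k" by (rule mset_subset_eqD[OF assms(2)])
  then obtain j' where "(SOME w. w \<in># v) = prod_word i j' k"
    using mem_target_iff[OF assms(1)] by blast
  then show ?thesis unfolding output_index_def prod_word_def by simp
qed

lemma card_atoms_le:
  assumes "finite S"
  shows "finite (atoms S) \<and> card (atoms S) \<le> card S"
proof -
  have "atoms S \<subseteq> (\<lambda>v. hd (the_elem (set_mset v))) ` S"
  proof
    fix x assume "x \<in> atoms S"
    then obtain v where "v \<in> S" "set_mset v = {[x]}" unfolding atoms_def by blast
    then show "x \<in> (\<lambda>v. hd (the_elem (set_mset v))) ` S" by (intro image_eqI[of _ _ v]) auto
  qed
  moreover have "card ((\<lambda>v. hd (the_elem (set_mset v))) ` S) \<le> card S"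
    using assms by (rule card_image_le)
  ultimately show ?thesis
    using card_mono[OF finite_imageI[OF assms]] finite_subset[OF _ finite_imageI[OF assms]] by force
qed

lemma card_vimage_atoms_le:
  assumes "inj f" "finite S"
  shows "finite (f -` atoms S) \<and> card (f -` atoms S) \<le> card S"
proof -
  have "card (f -` atoms S) \<le> card (atoms S)"
    using card_vimage_inj_on_le[of f UNIV "atoms S"] card_atoms_le[OF assms(2)] assms(1) by simp
  then show ?thesis
    using card_atoms_le[OF assms(2)] finite_vimageI[OF _ assms(1)] by simp
qed

lemma finite_realized: "finite A \<Longrightarrow> finite C \<Longrightarrow> finite (realized A C V)"
  by (rule finite_subset[OF realized_subset_triangles_UNIV finite_triangles])

lemma segment_inv_vals: "segment_inv A C \<sigma>0 \<sigma> S \<Longrightarrow> vals \<sigma> \<subseteq> ran (fst \<sigma>) \<union> S \<union> disk_vals \<sigma>0"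
  unfolding segment_inv_def vals_def disk_vals_def ran_def by blast

lemma realized_subset_triangles:
  assumes inv: "segment_inv A C \<sigma>0 \<sigma> S" and A: "finite A" and V: "V \<subseteq> vals \<sigma>"
  shows "realized A C V - realized A C (vals \<sigma>0)
           \<subseteq> triangles (Inl -` atoms S) (Inr -` atoms S) (output_index ` V)"
proof clarify
  fix i j k assume new: "(i, j, k) \<in> realized A C V" "(i, j, k) \<notin> realized A C (vals \<sigma>0)"
  then obtain v where "v \<in> V" "v \<subseteq># target A C i k" "prod_word i j k \<in># v"
    unfolding realized_def by blast
  then have "(i, k) \<in> output_index ` V"
    using output_index_eq[OF A] by (metis image_eqI)
  moreover have "(i, j, k) \<in> triangles (Inl -` atoms S) (Inr -` atoms S) UNIV"
    using new realized_mono[OF V] inv unfolding segment_inv_def by blast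
  ultimately show "(i, j, k) \<in> triangles (Inl -` atoms S) (Inr -` atoms S) (output_index ` V)"
    unfolding triangles_def by simp
qed

lemma card_realized_le:
  fixes X :: real
  assumes inv: "segment_inv A C \<sigma>0 \<sigma> S" and A: "finite A" and V: "V \<subseteq> vals \<sigma>"
    and fin: "finite S" "finite V" and card: "card S \<le> X" "card V \<le> X"
  shows "card (realized A C V - realized A C (vals \<sigma>0)) \<le> 2 * X * sqrt X"
proof -
  let ?T = "triangles (Inl -` atoms S) (Inr -` atoms S) (output_index ` V)"
  have "finite (Inl -` atoms S)" "card (Inl -` atoms S) \<le> card S"
    "finite (Inr -` atoms S)" "card (Inr -` atoms S) \<le> card S"
    using card_vimage_atoms_le[of Inl S] card_vimage_atoms_le[of Inr S] fin(1) by auto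
  moreover have "finite (output_index ` V)" "card (output_index ` V) \<le> card V"
    using fin(2) by (auto intro: card_image_le)
  ultimately have "finite ?T" "card ?T \<le> 2 * X * sqrt X"
    using card by (auto intro!: finite_triangles card_triangles_le)
  moreover have "card (realized A C V - realized A C (vals \<sigma>0)) \<le> card ?T"
    using realized_subset_triangles[OF inv A V] \<open>finite ?T\<close> by (rule card_mono[rotated])
  ultimately show ?thesis by linarith
qed

lemma card_new_realized_le:
  assumes A: "finite A" and C: "finite C" and run: "run M B \<sigma> prog = Some \<sigma>1"
    and ne: "no_empty_words \<sigma>" and ok: "mem_ok M \<sigma>"
  shows "card (realized A C (vals \<sigma>1) - realized A C (vals \<sigma>))
           \<le> 2 * real (2 * M + io_cost prog * min B M) * sqrt (2 * M + io_cost prog * min B M)"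
proof -
  obtain S where S: "finite S" "card S \<le> card (ran (fst \<sigma>)) + io_cost prog * min B M"
    and inv: "segment_inv A C \<sigma> \<sigma>1 S"
    using run_segment_inv[OF A run ne ok] by blast
  have ok1: "mem_ok M \<sigma>1" using run_mem_ok[OF run ok] .
  define V where "V = ran (fst \<sigma>1) \<union> (S \<inter> vals \<sigma>1)"
  have V: "V \<subseteq> vals \<sigma>1" "finite V" "card V \<le> M + card S"
    using mem_ok_card_ran[OF ok1] S(1) card_Un_le[of "ran (fst \<sigma>1)" "S \<inter> vals \<sigma>1"]
      card_mono[OF S(1), of "S \<inter> vals \<sigma>1"]
    unfolding V_def vals_def by auto
  have "vals \<sigma>1 \<subseteq> V \<union> vals \<sigma>"
    using segment_inv_vals[OF inv] unfolding V_def vals_def by blast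
  then have "realized A C (vals \<sigma>1) - realized A C (vals \<sigma>) \<subseteq> realized A C V - realized A C (vals \<sigma>)"
    using realized_mono[of "vals \<sigma>1" "V \<union> vals \<sigma>" A C] unfolding realized_Un by blast
  then have "card (realized A C (vals \<sigma>1) - realized A C (vals \<sigma>))
               \<le> card (realized A C V - realized A C (vals \<sigma>))"
    using finite_realized[OF A C] by (intro card_mono) auto
  also have "\<dots> \<le> 2 * real (2 * M + io_cost prog * min B M) * sqrt (2 * M + io_cost prog * min B M)"
  proof (rule card_realized_le[OF inv A V(1) S(1) V(2)])
    have "card S \<le> 2 * M + io_cost prog * min B M" "card V \<le> 2 * M + io_cost prog * min B M"
      using S(2) V(3) mem_ok_card_ran[OF ok] by linarith+
    then show "real (card S) \<le> real (2 * M + io_cost prog * min B M)"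
      "real (card V) \<le> real (2 * M + io_cost prog * min B M)" by (simp_all only: of_nat_le_iff)
  qed
  finally show ?thesis by simp
qed

lemma init_state_mem [simp]: "fst (init_state A C pos) = Map.empty"
  unfolding init_state_def by simp

lemma init_state_disk_singleton: "snd (init_state A C pos) b t = Some v \<Longrightarrow> \<exists>x. v = {#[x]#}"
  unfolding init_state_def by (auto split: if_splits)

lemma no_empty_words_init: "no_empty_words (init_state A C pos)"
  unfolding no_empty_words_def vals_def disk_vals_def ran_def
  by (auto dest: init_state_disk_singleton)

lemma mem_ok_init: "mem_ok M (init_state A C pos)"
  unfolding mem_ok_def by simp

lemma realized_init: "realized A C (vals (init_state A C pos)) = {}"
  unfolding realized_def vals_def disk_vals_def ran_def prod_word_def
  by (auto dest: init_state_disk_singleton)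

lemma target_stored:
  assumes A: "finite A" and out: "\<forall>(i, k) \<in> prod_pattern A C. \<exists>b t. t < B \<and> d b t = Some (target A C i k)"
    and ijk: "(i, j, k) \<in> triangles A C UNIV"
  obtains b t where "d b t = Some (target A C i k)" "prod_word i j k \<in># target A C i k"
proof -
  have "(i, j) \<in> A" "(j, k) \<in> C" using ijk unfolding triangles_def by auto
  then have "(i, k) \<in> prod_pattern A C" "prod_word i j k \<in># target A C i k"
    unfolding prod_pattern_def mem_target_iff[OF A] by auto
  then show thesis using out that by blast
qed

lemma triangles_subset_realized:
  assumes A: "finite A" and out: "\<forall>(i, k) \<in> prod_pattern A C. \<exists>b t. t < B \<and> snd \<sigma> b t = Some (target A C i k)"
  shows "triangles A C UNIV \<subseteq> realized A C (vals \<sigma>)"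
proof clarify
  fix i j k assume "(i, j, k) \<in> triangles A C UNIV"
  then obtain b t where "snd \<sigma> b t = Some (target A C i k)" "prod_word i j k \<in># target A C i k"
    using target_stored[OF A out] by blast
  then show "(i, j, k) \<in> realized A C (vals \<sigma>)"
    unfolding realized_def vals_def disk_vals_def by (auto intro: ranI)
qed

lemma card_products_le_io:
  assumes A: "finite A" and C: "finite C" and run: "run M B (init_state A C pos) prog = Some \<sigma>1"
    and out: "\<forall>(i, k) \<in> prod_pattern A C. \<exists>b t. t < B \<and> snd \<sigma>1 b t = Some (target A C i k)"
  shows "card (triangles A C UNIV) \<le> 2 * real (io_cost prog * min B M) * sqrt (io_cost prog * min B M)"
proof -
  obtain S where S: "finite S" "card S \<le> io_cost prog * min B M"
    and inv: "segment_inv A C (init_state A C pos) \<sigma>1 S"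
    using run_segment_inv[OF A run no_empty_words_init mem_ok_init] by auto
  have "triangles A C UNIV \<subseteq> realized A C (S \<inter> vals \<sigma>1)"
  proof clarify
    fix i j k assume "(i, j, k) \<in> triangles A C UNIV"
    then obtain b t where bt: "snd \<sigma>1 b t = Some (target A C i k)"
      and w: "prod_word i j k \<in># target A C i k"
      using target_stored[OF A out] by blast
    have "snd (init_state A C pos) b t \<noteq> Some (target A C i k)"
      using w init_state_disk_singleton by (fastforce simp: prod_word_def)
    then have "target A C i k \<in> S"
      using bt inv unfolding segment_inv_def by blast
    moreover have "target A C i k \<in> vals \<sigma>1"
      using bt unfolding vals_def disk_vals_def by (auto intro: ranI)
    ultimately show "(i, j, k) \<in> realized A C (S \<inter> vals \<sigma>1)"
      using w unfolding realized_def by auto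
  qed
  then have "card (triangles A C UNIV) \<le> card (realized A C (S \<inter> vals \<sigma>1) - realized A C (vals (init_state A C pos)))"
    using finite_realized[OF A C] by (intro card_mono) (auto simp: realized_init)
  also have "\<dots> \<le> 2 * real (io_cost prog * min B M) * sqrt (io_cost prog * min B M)"
  proof (rule card_realized_le[OF inv A _ S(1)])
    have "card (S \<inter> vals \<sigma>1) \<le> io_cost prog * min B M"
      using card_mono[OF S(1), of "S \<inter> vals \<sigma>1"] S(2) by simp
    then show "real (card S) \<le> real (io_cost prog * min B M)"
      "real (card (S \<inter> vals \<sigma>1)) \<le> real (io_cost prog * min B M)"
      using S(2) by (simp_all only: of_nat_le_iff)
  qed (use S(1) in auto)
  finally show ?thesis by simp
qed

lemma io_cost_split: "k \<le> io_cost prog \<Longrightarrow> \<exists>p q. prog = p @ q \<and> io_cost p = k"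
proof (induction prog arbitrary: k)
  case Nil
  then show ?case by simp
next
  case (Cons ins prog)
  show ?case
  proof (cases "k = 0")
    case True
    then show ?thesis by (intro exI[of _ "[]"] exI[of _ "ins # prog"]) simp
  next
    case False
    define k' where "k' = (if is_io ins then k - 1 else k)"
    have "k' \<le> io_cost prog" using Cons.prems False unfolding k'_def by auto
    then obtain p q where "prog = p @ q" "io_cost p = k'" using Cons.IH by blast
    then show ?thesis
      using False unfolding k'_def by (intro exI[of _ "ins # p"] exI[of _ q]) auto
  qed
qed

lemma card_diff_le_segments:
  fixes F :: "state \<Rightarrow> 'a set" and G :: real
  assumes seg: "\<And>\<sigma> p \<sigma>'. run M B \<sigma> p = Some \<sigma>' \<Longrightarrow> P \<sigma> \<Longrightarrow> io_cost p \<le> k \<Longrightarrow> card (F \<sigma>' - F \<sigma>) \<le> G"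
    and pres: "\<And>\<sigma> p \<sigma>'. run M B \<sigma> p = Some \<sigma>' \<Longrightarrow> P \<sigma> \<Longrightarrow> P \<sigma>'"
    and fin: "\<And>\<sigma>. finite (F \<sigma>)" and k: "0 < k"
  shows "run M B \<sigma> prog = Some \<sigma>1 \<Longrightarrow> P \<sigma> \<Longrightarrow> card (F \<sigma>1 - F \<sigma>) \<le> (io_cost prog div k + 1) * G"
proof (induction "io_cost prog" arbitrary: prog \<sigma> rule: less_induct)
  case less
  have "card (F \<sigma> - F \<sigma>) \<le> G" by (rule seg[of \<sigma> "[]"]) (use less.prems(2) in simp_all)
  then have G: "0 \<le> G" by simp
  show ?case
  proof (cases "io_cost prog \<le> k")
    case True
    then have "card (F \<sigma>1 - F \<sigma>) \<le> G" by (rule seg[OF less.prems])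
    also have "\<dots> \<le> (io_cost prog div k + 1) * G" using G by (simp add: distrib_right)
    finally show ?thesis .
  next
    case False
    obtain p q where prog: "prog = p @ q" and p: "io_cost p = k"
      using io_cost_split[of k prog] False by auto
    obtain \<sigma>m where run_p: "run M B \<sigma> p = Some \<sigma>m" and run_q: "run M B \<sigma>m q = Some \<sigma>1"
      using less.prems(1) unfolding prog run_append by (auto split: Option.bind_splits)
    have q: "io_cost q < io_cost prog" "io_cost prog div k = io_cost q div k + 1"
      using prog p k by simp_all
    have "F \<sigma>1 - F \<sigma> \<subseteq> (F \<sigma>1 - F \<sigma>m) \<union> (F \<sigma>m - F \<sigma>)" by blast
    then have "card (F \<sigma>1 - F \<sigma>) \<le> card ((F \<sigma>1 - F \<sigma>m) \<union> (F \<sigma>m - F \<sigma>))"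
      by (rule card_mono[rotated]) (simp add: fin)
    then have "card (F \<sigma>1 - F \<sigma>) \<le> card (F \<sigma>1 - F \<sigma>m) + card (F \<sigma>m - F \<sigma>)"
      using card_Un_le le_trans by blast
    moreover have "card (F \<sigma>1 - F \<sigma>m) \<le> (io_cost q div k + 1) * G"
      using less.hyps[OF q(1) run_q pres[OF run_p less.prems(2)]] .
    moreover have "card (F \<sigma>m - F \<sigma>) \<le> G"
      using seg[OF run_p less.prems(2)] p by simp
    ultimately show ?thesis unfolding q(2) by (simp add: algebra_simps)
  qed
qed

section \<open>The I/O lower bound\<close>

lemma segment_length_bounds:
  fixes M B :: nat
  assumes "0 < B"
  shows "max 1 (M div B) * min B M \<le> M" and "M \<le> 2 * B * max 1 (M div B)"
proof -
  have M: "M = M div B * B + M mod B" and r: "M mod B < B"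
    using assms by simp_all
  show "max 1 (M div B) * min B M \<le> M"
  proof (cases "M div B = 0")
    case True
    then show ?thesis by simp
  next
    case False
    then have "max 1 (M div B) = M div B" by simp
    moreover have "M div B * min B M \<le> M div B * B" by (rule mult_le_mono2) simp
    ultimately show ?thesis using M by linarith
  qed
  show "M \<le> 2 * B * max 1 (M div B)"
  proof (cases "M div B = 0")
    case True
    then show ?thesis using M r by simp
  next
    case False
    then have "max 1 (M div B) = M div B" "B \<le> M div B * B" by simp_all
    moreover have "2 * B * (M div B) = 2 * (M div B * B)" by simp
    ultimately show ?thesis using M r by linarith
  qed
qed

lemma two_mult_sqrt_mono: "0 \<le> a \<Longrightarrow> a \<le> b \<Longrightarrow> 2 * a * sqrt a \<le> 2 * b * sqrt (b :: real)"
  by (simp add: mult_mono)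

lemma card_products_le_few_io:
  assumes A: "finite A" and C: "finite C" and run: "run M B (init_state A C pos) prog = Some \<sigma>1"
    and out: "\<forall>(i, k) \<in> prod_pattern A C. \<exists>b t. t < B \<and> snd \<sigma>1 b t = Some (target A C i k)"
    and few: "io_cost prog * min B M \<le> M"
  shows "card (triangles A C UNIV) \<le> 2 * io_cost prog * B * sqrt M"
proof -
  define X where "X = real (io_cost prog * min B M)"
  have "X \<le> io_cost prog * B" unfolding X_def by (simp add: mult_left_mono)
  moreover have "sqrt X \<le> sqrt M" unfolding X_def using few by (intro real_sqrt_le_mono of_nat_mono)
  ultimately have "X * sqrt X \<le> io_cost prog * B * sqrt M"
    by (intro mult_mono) (auto simp: X_def)
  moreover have "card (triangles A C UNIV) \<le> 2 * X * sqrt X"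
    unfolding X_def by (rule card_products_le_io[OF A C run out])
  ultimately show ?thesis by simp
qed

lemma segment_count_bound:
  fixes io k M B :: nat
  assumes k: "0 < k" "k \<le> io" "k * min B M \<le> M" "M \<le> 2 * B * k"
  shows "(real (io div k) + 1) * (2 * real (2 * M + k * min B M) * sqrt (2 * M + k * min B M))
           \<le> 42 * io * B * sqrt M"
proof -
  let ?d = "real (io div k) + 1" and ?G = "2 * real (2 * M + k * min B M) * sqrt (2 * M + k * min B M)"
  have "real (2 * M + k * min B M) \<le> real (3 * M)" using k(3) by (intro of_nat_mono) simp
  then have "?G \<le> 2 * real (3 * M) * sqrt (real (3 * M))"
    by (intro two_mult_sqrt_mono) simp_all
  also have "\<dots> = 6 * sqrt 3 * (M * sqrt M)" by (simp add: real_sqrt_mult)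
  also have "\<dots> \<le> 6 * (7 / 4) * (M * sqrt M)"
    by (intro mult_right_mono mult_left_mono real_le_lsqrt) (auto simp: power2_eq_square)
  finally have G: "?G \<le> 21 / 2 * (M * sqrt M)" by simp
  have "io div k * k \<le> io" by (rule div_times_less_eq_dividend)
  then have "(io div k + 1) * k \<le> 2 * io"
    using k(2) unfolding add_mult_distrib by linarith
  then have "real ((io div k + 1) * k) \<le> real (2 * io)" by (rule of_nat_mono)
  then have dk: "?d * k \<le> 2 * io" by (simp add: distrib_right)
  have "?d * ?G \<le> ?d * (21 / 2 * (M * sqrt M))" by (rule mult_left_mono[OF G]) simp
  also have "\<dots> \<le> ?d * (21 / 2 * ((2 * B * k) * sqrt M))"
    using k(4) by (intro mult_left_mono mult_right_mono) (simp_all flip: of_nat_mult)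
  also have "\<dots> = 21 * (?d * k) * (B * sqrt M)" by (simp add: algebra_simps)
  also have "\<dots> \<le> 21 * (2 * io) * (B * sqrt M)"
    using dk by (intro mult_right_mono mult_left_mono) (auto simp: mult.commute)
  finally show ?thesis by (simp add: algebra_simps)
qed

lemma card_products_le_many_io:
  assumes A: "finite A" and C: "finite C" and run: "run M B (init_state A C pos) prog = Some \<sigma>1"
    and out: "\<forall>(i, k) \<in> prod_pattern A C. \<exists>b t. t < B \<and> snd \<sigma>1 b t = Some (target A C i k)"
    and k: "0 < k" "k \<le> io_cost prog" "k * min B M \<le> M" "M \<le> 2 * B * k"
  shows "card (triangles A C UNIV) \<le> 42 * io_cost prog * B * sqrt M"
proof -
  define G where "G = 2 * real (2 * M + k * min B M) * sqrt (2 * M + k * min B M)"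
  let ?F = "\<lambda>\<sigma>. realized A C (vals \<sigma>)"
  have "real (card (triangles A C UNIV)) \<le> card (?F \<sigma>1 - ?F (init_state A C pos))"
    using triangles_subset_realized[OF A out] finite_realized[OF A C]
    by (intro of_nat_mono card_mono) (auto simp: realized_init)
  also have "\<dots> \<le> (io_cost prog div k + 1) * G"
  proof (rule card_diff_le_segments[where F = ?F and P = "\<lambda>\<sigma>. no_empty_words \<sigma> \<and> mem_ok M \<sigma>"])
    show "card (?F \<sigma>' - ?F \<sigma>) \<le> G"
      if "run M B \<sigma> p = Some \<sigma>'" "no_empty_words \<sigma> \<and> mem_ok M \<sigma>" "io_cost p \<le> k" for \<sigma> p \<sigma>'
    proof -
      have "card (?F \<sigma>' - ?F \<sigma>)
              \<le> 2 * real (2 * M + io_cost p * min B M) * sqrt (2 * M + io_cost p * min B M)"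
        using card_new_realized_le[OF A C that(1)] that(2) by blast
      also have "\<dots> \<le> G"
        unfolding G_def using that(3) by (intro two_mult_sqrt_mono of_nat_mono) (simp_all add: mult_le_mono1)
      finally show ?thesis .
    qed
    show "no_empty_words \<sigma>' \<and> mem_ok M \<sigma>'"
      if "run M B \<sigma> p = Some \<sigma>'" "no_empty_words \<sigma> \<and> mem_ok M \<sigma>" for \<sigma> p \<sigma>'
      using run_segment_inv[OF A that(1)] run_mem_ok[OF that(1)] that(2) by blast
  qed (use finite_realized[OF A C] k(1) run no_empty_words_init mem_ok_init in auto)
  also have "\<dots> \<le> 42 * io_cost prog * B * sqrt M"
    using segment_count_bound[OF k] unfolding G_def by (simp add: add.commute)
  finally show ?thesis .
qed

lemma card_products_le:
  assumes A: "finite A" and C: "finite C" and B: "0 < B"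
    and comp: "computes_product M B A C pos prog"
  shows "card (triangles A C UNIV) \<le> 42 * io_cost prog * B * sqrt M"
proof -
  obtain \<sigma>1 where run: "run M B (init_state A C pos) prog = Some \<sigma>1"
    and out: "\<forall>(i, k) \<in> prod_pattern A C. \<exists>b t. t < B \<and> snd \<sigma>1 b t = Some (target A C i k)"
    using comp unfolding computes_product_def by fastforce
  define k where "k = max 1 (M div B)"
  note k = segment_length_bounds[OF B, of M, folded k_def]
  show ?thesis
  proof (cases "io_cost prog < k")
    case True
    then have "io_cost prog * min B M \<le> M" using k(1) by (meson less_imp_le mult_le_mono1 le_trans)
    then have "card (triangles A C UNIV) \<le> 2 * io_cost prog * B * sqrt M"
      by (rule card_products_le_few_io[OF A C run out])
    also have "\<dots> \<le> 42 * io_cost prog * B * sqrt M" by (intro mult_right_mono) auto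
    finally show ?thesis .
  next
    case False
    then show ?thesis using card_products_le_many_io[OF A C run out _ _ k] by (simp add: k_def)
  qed
qed

lemma block_dimensions:
  fixes N Z :: nat
  assumes "0 < Z" "Z < N\<^sup>2"
  obtains s t where "0 < s" "s\<^sup>2 \<le> Z" "s < N" "s * t \<le> N" "N * sqrt Z \<le> 4 * real (s * t * s)"
proof -
  define s where "s = floor_sqrt Z"
  define t where "t = N div s"
  have s: "0 < s" "s\<^sup>2 \<le> Z" "Z < (s + 1)\<^sup>2"
    using assms(1) Suc_floor_sqrt_power2_gt[of Z] unfolding s_def by auto
  have "s\<^sup>2 < N\<^sup>2" using s(2) assms(2) by linarith
  then have "s < N" using power_less_imp_less_base by blast
  have "0 < t" unfolding t_def using s(1) \<open>s < N\<close> by (simp add: div_greater_zero_iff)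
  have "s * t \<le> N" unfolding t_def using div_times_less_eq_dividend[of N s] by (simp add: mult.commute)
  have "N < s + t * s" unfolding t_def using dividend_less_div_times[OF s(1)] .
  moreover have "s \<le> t * s" using \<open>0 < t\<close> by simp
  ultimately have "real N \<le> real (2 * t * s)" by (intro of_nat_mono) linarith
  have "(s + 1)\<^sup>2 \<le> (2 * s)\<^sup>2" using s(1) by (intro power_mono) auto
  then have "Z \<le> (2 * s)\<^sup>2" using s(3) by linarith
  then have "real Z \<le> (real (2 * s))\<^sup>2" by (simp only: of_nat_power[symmetric] of_nat_le_iff)
  then have "sqrt Z \<le> real (2 * s)" by (intro real_le_lsqrt) simp_all
  with \<open>real N \<le> real (2 * t * s)\<close> have "N * sqrt Z \<le> real (2 * t * s) * real (2 * s)"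
    by (intro mult_mono) auto
  then have "N * sqrt Z \<le> 4 * real (s * t * s)" by (simp add: algebra_simps)
  then show thesis using that s(1,2) \<open>s < N\<close> \<open>s * t \<le> N\<close> by blast
qed

lemma hard_instance:
  fixes N Z :: nat
  assumes "Z < N\<^sup>2"
  obtains A C where "A \<subseteq> {..<N} \<times> {..<N}" "C \<subseteq> {..<N} \<times> {..<N}" "card A \<le> N" "card C \<le> N"
    and "card (prod_pattern A C) \<le> Z" "finite A" "finite C"
    and "N * sqrt Z \<le> 4 * card (triangles A C UNIV)"
proof (cases "Z = 0")
  case True
  then show thesis by (intro that[of "{}" "{}"]) (auto simp: prod_pattern_def)
next
  case False
  then obtain s t where s: "0 < s" "s\<^sup>2 \<le> Z" "s < N" "s * t \<le> N"
    and bound: "N * sqrt Z \<le> 4 * real (s * t * s)"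
    using block_dimensions[OF _ assms] by blast
  define A :: "(nat \<times> nat) set" where "A = {..<s} \<times> {..<t}"
  define C :: "(nat \<times> nat) set" where "C = {..<t} \<times> {..<s}"
  have "triangles A C UNIV = {..<s} \<times> {..<t} \<times> {..<s}"
    unfolding triangles_def A_def C_def by auto
  then have "card (triangles A C UNIV) = s * t * s"
    by (simp add: card_cartesian_product)
  moreover have "card (prod_pattern A C) \<le> card ({..<s} \<times> {..<s})"
    unfolding prod_pattern_def A_def C_def by (intro card_mono) auto
  moreover have "card A \<le> N" "card C \<le> N"
    unfolding A_def C_def using s(4) by (simp_all add: card_cartesian_product mult.commute)
  moreover have "A \<subseteq> {..<N} \<times> {..<N}" "C \<subseteq> {..<N} \<times> {..<N}"
  proof -
    have "1 * t \<le> s * t" using s(1) by (intro mult_le_mono1) simp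
    then have "t \<le> N" using s(4) by linarith
    then show "A \<subseteq> {..<N} \<times> {..<N}" "C \<subseteq> {..<N} \<times> {..<N}"
      unfolding A_def C_def using s(3) by auto
  qed
  ultimately show thesis
    using that[of A C] s(2) bound by (simp add: A_def C_def power2_eq_square card_cartesian_product)
qed

theorem theorem2:
  shows "\<exists>c>0. \<forall>(N::nat) (Z::nat) (M::nat) (B::nat).
           0 < N \<longrightarrow> Z < N^2 \<longrightarrow> 0 < M \<longrightarrow> 0 < B \<longrightarrow>
           (\<exists>A C. A \<subseteq> {..<N} \<times> {..<N} \<and> C \<subseteq> {..<N} \<times> {..<N} \<and>
                  card A \<le> N \<and> card C \<le> N \<and> card (prod_pattern A C) \<le> Z \<and>
                  (\<forall>pos prog. valid_layout B A C pos \<longrightarrow> computes_product M B A C pos prog \<longrightarrow>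
                     c * min (real N ^ 2 / (real M * real B))
                             (real N * sqrt (real Z) / (sqrt (real M) * real B))
                       \<le> real (io_cost prog)))"
proof (intro exI[of _ "1 / 168"] conjI allI impI)
  fix N Z M B :: nat
  assume "0 < N" "Z < N^2" "0 < M" "0 < B"
  obtain A C where AC: "A \<subseteq> {..<N} \<times> {..<N}" "C \<subseteq> {..<N} \<times> {..<N}" "card A \<le> N" "card C \<le> N"
    "card (prod_pattern A C) \<le> Z" "finite A" "finite C" "N * sqrt Z \<le> 4 * card (triangles A C UNIV)"
    using hard_instance[OF \<open>Z < N^2\<close>] by blast
  have "1 / 168 * min (real N ^ 2 / (real M * real B)) (real N * sqrt Z / (sqrt M * real B))
          \<le> io_cost prog" if "computes_product M B A C pos prog" for pos prog
  proof -
    have "N * sqrt Z \<le> 168 * real (io_cost prog) * (sqrt M * B)"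
      using AC(8) card_products_le[OF AC(6,7) \<open>0 < B\<close> that] by (simp add: algebra_simps)
    then have "N * sqrt Z / (sqrt M * B) \<le> 168 * real (io_cost prog)"
      using \<open>0 < M\<close> \<open>0 < B\<close> by (simp add: divide_le_eq)
    then have "min (real N ^ 2 / (real M * real B)) (N * sqrt Z / (sqrt M * B)) \<le> 168 * real (io_cost prog)"
      by (rule order_trans[OF min.cobounded2])
    then show ?thesis by simp
  qed
  then show "\<exists>A C. A \<subseteq> {..<N} \<times> {..<N} \<and> C \<subseteq> {..<N} \<times> {..<N} \<and>
                  card A \<le> N \<and> card C \<le> N \<and> card (prod_pattern A C) \<le> Z \<and>
                  (\<forall>pos prog. valid_layout B A C pos \<longrightarrow> computes_product M B A C pos prog \<longrightarrow>
                     1 / 168 * min (real N ^ 2 / (real M * real B))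
                             (real N * sqrt (real Z) / (sqrt (real M) * real B))
                       \<le> real (io_cost prog))"
    using AC by blast
qed simp

end
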